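(* Let $T=(p,q:F\to E)$ be an LR textile system, and let $\Lambda_T$ be its associated 2-graph. Then $T$ is essential if and only if $\Lambda_T$ is essential.
   Context: Directed graph $E=(E^0,E^1,r,s)$ is essential if $r$ and $s$ are onto $E^0$. Textile system $T=(p,q:F\to E)$: graph homomorphisms $p,q$ (commuting with $r,s$) with $f\mapsto(r(f),p(f),s(f),q(f))$ injective on $F^1$. LR: $p$ has unique $r$-path lifting (for $v\in F^0,e\in E^1$ with $p(v)=r(e)$, exactly one $f\in F^1$ with $r(f)=v,p(f)=e$) and $q$ has unique $s$-path lifting (same with $s$). $T$ is essential if $F$ is essential and $p,q$ are surjective (on vertices and edges). A 2-graph $\Lambda$ (category with degree functor $d:\Lambda\to\mathbb N^2$ with unique factorization, $\Lambda^m=d^{-1}(m)$) is essential if $v\Lambda^m$ and $\Lambda^mv$ are nonempty for all vertices $v$ and $m\in\mathbb N^2$. $\Lambda_T$ (a 2-graph when $T$ is LR): vertices $E^0$; color-1 edges $E^1$ with range and source from $E$; color-2 edges $F^0$ with $r(w)=q(w)$, $s(w)=p(w)$; commuting squares $ve\sim e'w$ iff some $f\in F^1$ has $r(f)=v,s(f)=w,p(f)=e,q(f)=e'$; $\Lambda_T^{\varepsilon_1+\varepsilon_2}$ corresponds to $F^1$. *)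

theory Defs
  imports Main
begin

record ('v, 'e) dgraph =
  verts :: "'v set"
  arcs  :: "'e set"
  rng   :: "'e \<Rightarrow> 'v"
  src   :: "'e \<Rightarrow> 'v"

definition is_dgraph :: "('v, 'e) dgraph \<Rightarrow> bool" where
  "is_dgraph G \<longleftrightarrow> (\<forall>e\<in>arcs G. rng G e \<in> verts G \<and> src G e \<in> verts G)"

definition graph_essential :: "('v, 'e) dgraph \<Rightarrow> bool" where
  "graph_essential G \<longleftrightarrow> rng G ` arcs G = verts G \<and> src G ` arcs G = verts G"

definition graph_hom ::
  "('w, 'f) dgraph \<Rightarrow> ('v, 'e) dgraph \<Rightarrow> ('w \<Rightarrow> 'v) \<Rightarrow> ('f \<Rightarrow> 'e) \<Rightarrow> bool" where
  "graph_hom F E h0 h1 \<longleftrightarrow>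
     (\<forall>w\<in>verts F. h0 w \<in> verts E) \<and>
     (\<forall>f\<in>arcs F. h1 f \<in> arcs E \<and> rng E (h1 f) = h0 (rng F f) \<and> src E (h1 f) = h0 (src F f))"

record ('v, 'e, 'w, 'f) textile =
  tE  :: "('v, 'e) dgraph"
  tF  :: "('w, 'f) dgraph"
  tp0 :: "'w \<Rightarrow> 'v"
  tp1 :: "'f \<Rightarrow> 'e"
  tq0 :: "'w \<Rightarrow> 'v"
  tq1 :: "'f \<Rightarrow> 'e"

definition textile_system :: "('v, 'e, 'w, 'f) textile \<Rightarrow> bool" where
  "textile_system T \<longleftrightarrow>
     is_dgraph (tE T) \<and> is_dgraph (tF T) \<and>
     graph_hom (tF T) (tE T) (tp0 T) (tp1 T) \<and>
     graph_hom (tF T) (tE T) (tq0 T) (tq1 T) \<and>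
     inj_on (\<lambda>f. (rng (tF T) f, tp1 T f, src (tF T) f, tq1 T f)) (arcs (tF T))"

text \<open>LR: p has unique r-path lifting and q has unique s-path lifting.\<close>
definition textile_LR :: "('v, 'e, 'w, 'f) textile \<Rightarrow> bool" where
  "textile_LR T \<longleftrightarrow>
     textile_system T \<and>
     (\<forall>v\<in>verts (tF T). \<forall>e\<in>arcs (tE T). tp0 T v = rng (tE T) e \<longrightarrow>
        (\<exists>!f. f \<in> arcs (tF T) \<and> rng (tF T) f = v \<and> tp1 T f = e)) \<and>
     (\<forall>v\<in>verts (tF T). \<forall>e\<in>arcs (tE T). tq0 T v = src (tE T) e \<longrightarrow>
        (\<exists>!f. f \<in> arcs (tF T) \<and> src (tF T) f = v \<and> tq1 T f = e))"

definition textile_essential :: "('v, 'e, 'w, 'f) textile \<Rightarrow> bool" where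
  "textile_essential T \<longleftrightarrow>
     graph_essential (tF T) \<and>
     tp0 T ` verts (tF T) = verts (tE T) \<and> tp1 T ` arcs (tF T) = arcs (tE T) \<and>
     tq0 T ` verts (tF T) = verts (tE T) \<and> tq1 T ` arcs (tF T) = arcs (tE T)"

text \<open>Skeleton of \<Lambda>_T: vertices E^0; colour-1 edges E^1 (Inl), colour-2 edges F^0 (Inr)
  with r(w) = q(w), s(w) = p(w).\<close>
fun sk_rng :: "('v, 'e, 'w, 'f) textile \<Rightarrow> ('e + 'w) \<Rightarrow> 'v" where
  "sk_rng T (Inl e) = rng (tE T) e"
| "sk_rng T (Inr w) = tq0 T w"

fun sk_src :: "('v, 'e, 'w, 'f) textile \<Rightarrow> ('e + 'w) \<Rightarrow> 'v" where
  "sk_src T (Inl e) = src (tE T) e"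
| "sk_src T (Inr w) = tp0 T w"

fun sk_edge :: "('v, 'e, 'w, 'f) textile \<Rightarrow> ('e + 'w) \<Rightarrow> bool" where
  "sk_edge T (Inl e) = (e \<in> arcs (tE T))"
| "sk_edge T (Inr w) = (w \<in> verts (tF T))"

definition sk_square :: "('v, 'e, 'w, 'f) textile \<Rightarrow> 'w \<Rightarrow> 'e \<Rightarrow> 'e \<Rightarrow> 'w \<Rightarrow> bool" where
  "sk_square T v e e' w \<longleftrightarrow>
     (\<exists>f\<in>arcs (tF T). rng (tF T) f = v \<and> src (tF T) f = w \<and> tp1 T f = e \<and> tq1 T f = e')"

text \<open>A representative of a morphism of \<Lambda>_T: a composable skeleton path
  x_1 x_2 ... x_k (s(x_i) = r(x_{i+1})) from range vertex a to source vertex b;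
  the empty path represents the vertex a = b.\<close>
definition sk_path :: "('v, 'e, 'w, 'f) textile \<Rightarrow> 'v \<Rightarrow> ('e + 'w) list \<Rightarrow> 'v \<Rightarrow> bool" where
  "sk_path T a xs b \<longleftrightarrow>
     a \<in> verts (tE T) \<and> b \<in> verts (tE T) \<and> (\<forall>x\<in>set xs. sk_edge T x) \<and>
     (if xs = [] then a = b
      else sk_rng T (hd xs) = a \<and> sk_src T (last xs) = b \<and>
           (\<forall>i. Suc i < length xs \<longrightarrow> sk_src T (xs ! i) = sk_rng T (xs ! Suc i)))"

text \<open>One-step square move (replace v e by e' w) and the generated equivalence;
  morphisms of \<Lambda>_T are equivalence classes of skeleton paths.\<close>
definition sq_step :: "('v, 'e, 'w, 'f) textile \<Rightarrow> ('e + 'w) list \<Rightarrow> ('e + 'w) list \<Rightarrow> bool" where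
  "sq_step T xs ys \<longleftrightarrow>
     (\<exists>us vs v e e' w. sk_square T v e e' w \<and>
        xs = us @ [Inr v, Inl e] @ vs \<and> ys = us @ [Inl e', Inr w] @ vs)"

definition lam_mor :: "('v, 'e, 'w, 'f) textile \<Rightarrow> ('v \<times> ('e + 'w) list \<times> 'v) set set" where
  "lam_mor T = {{(a', ys, b'). a' = a \<and> b' = b \<and> sk_path T a ys b \<and>
                    (\<lambda>x y. sq_step T x y \<or> sq_step T y x)\<^sup>*\<^sup>* xs ys} | a xs b. sk_path T a xs b}"

definition lam_deg :: "('e + 'w) list \<Rightarrow> nat \<times> nat" where
  "lam_deg xs = (length (filter isl xs), length (filter (\<lambda>x. \<not> isl x) xs))"

text \<open>Range, source and degree of a morphism (well defined on classes).\<close>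
definition mor_rng :: "('v \<times> ('e + 'w) list \<times> 'v) set \<Rightarrow> 'v" where
  "mor_rng M = fst (SOME t. t \<in> M)"
definition mor_src :: "('v \<times> ('e + 'w) list \<times> 'v) set \<Rightarrow> 'v" where
  "mor_src M = snd (snd (SOME t. t \<in> M))"
definition mor_deg :: "('v \<times> ('e + 'w) list \<times> 'v) set \<Rightarrow> nat \<times> nat" where
  "mor_deg M = lam_deg (fst (snd (SOME t. t \<in> M)))"

definition lamT_essential :: "('v, 'e, 'w, 'f) textile \<Rightarrow> bool" where
  "lamT_essential T \<longleftrightarrow>
     (\<forall>v\<in>verts (tE T). \<forall>m::nat \<times> nat.
        (\<exists>M\<in>lam_mor T. mor_rng M = v \<and> mor_deg M = m) \<and>
        (\<exists>M\<in>lam_mor T. mor_src M = v \<and> mor_deg M = m))"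

end

theory Submission
  imports Defs
begin

text \<open>
  Both sides are equivalent to the essentiality of the coloured 1-skeleton of \<Lambda>_T: every
  vertex of E is the range and the source of an edge of E (colour 1) and of a vertex of F
  (colour 2), i.e. E is essential and p, q are onto E^0. On the side of T, path lifting
  transports these surjectivities to the edges of p, q and to r, s on F. On the side of
  \<Lambda>_T, the morphisms of degree (1,0) and (0,1) are the skeleton edges, and a morphism of
  any degree with prescribed range or source is built by adding skeleton edges one at a time.
\<close>

definition reverse_graph :: "('v, 'e) dgraph \<Rightarrow> ('v, 'e) dgraph" where
  "reverse_graph G = G\<lparr>rng := src G, src := rng G\<rparr>"

lemma reverse_graph_simps [simp]:
  "verts (reverse_graph G) = verts G" "arcs (reverse_graph G) = arcs G"
  "rng (reverse_graph G) = src G" "src (reverse_graph G) = rng G"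
  by (simp_all add: reverse_graph_def)

lemma is_dgraph_reverse_graph [simp]: "is_dgraph (reverse_graph G) \<longleftrightarrow> is_dgraph G"
  by (auto simp: is_dgraph_def)

lemma graph_hom_reverse_graph [simp]:
  "graph_hom (reverse_graph F) (reverse_graph E) h0 h1 \<longleftrightarrow> graph_hom F E h0 h1"
  by (auto simp: graph_hom_def)

text \<open>The existence half of unique r-path lifting. Unique s-path lifting of q is
  r-path lifting of q between the reversed graphs.\<close>

definition rng_lifting :: "('w, 'f) dgraph \<Rightarrow> ('v, 'e) dgraph \<Rightarrow> ('w \<Rightarrow> 'v) \<Rightarrow> ('f \<Rightarrow> 'e) \<Rightarrow> bool" where
  "rng_lifting F E h0 h1 \<longleftrightarrow>
     (\<forall>w\<in>verts F. \<forall>e\<in>arcs E. h0 w = rng E e \<longrightarrow> (\<exists>f\<in>arcs F. rng F f = w \<and> h1 f = e))"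

lemma graph_hom_rng_surj:
  assumes "graph_hom F E h0 h1" "is_dgraph E"
    and "h0 ` verts F = verts E" "rng F ` arcs F = verts F"
  shows "rng E ` arcs E = verts E"
proof
  show "rng E ` arcs E \<subseteq> verts E" using \<open>is_dgraph E\<close> by (auto simp: is_dgraph_def)
  show "verts E \<subseteq> rng E ` arcs E"
  proof
    fix v assume "v \<in> verts E"
    then have "v \<in> h0 ` rng F ` arcs F" using assms(3,4) by simp
    then obtain f where "f \<in> arcs F" "v = h0 (rng F f)" by blast
    then have "h1 f \<in> arcs E" "rng E (h1 f) = v" using assms(1) by (auto simp: graph_hom_def)
    then show "v \<in> rng E ` arcs E" by blast
  qed
qed

lemma rng_lifting_arcs_surj:
  assumes "graph_hom F E h0 h1" "is_dgraph E" "rng_lifting F E h0 h1"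
    and "h0 ` verts F = verts E"
  shows "h1 ` arcs F = arcs E"
proof
  show "h1 ` arcs F \<subseteq> arcs E" using assms(1) by (auto simp: graph_hom_def)
  show "arcs E \<subseteq> h1 ` arcs F"
  proof
    fix e assume e: "e \<in> arcs E"
    then have "rng E e \<in> verts E" using assms(2) by (simp add: is_dgraph_def)
    then have "rng E e \<in> h0 ` verts F" using assms(4) by simp
    then obtain w where "w \<in> verts F" "h0 w = rng E e" by auto
    then obtain f where "f \<in> arcs F" "h1 f = e" using e assms(3) by (auto simp: rng_lifting_def)
    then show "e \<in> h1 ` arcs F" by blast
  qed
qed

lemma rng_lifting_rng_surj:
  assumes "graph_hom F E h0 h1" "is_dgraph F" "rng_lifting F E h0 h1"
    and "rng E ` arcs E = verts E"
  shows "rng F ` arcs F = verts F"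
proof
  show "rng F ` arcs F \<subseteq> verts F" using assms(2) by (auto simp: is_dgraph_def)
  show "verts F \<subseteq> rng F ` arcs F"
  proof
    fix w assume w: "w \<in> verts F"
    then have "h0 w \<in> verts E" using assms(1) by (simp add: graph_hom_def)
    then have "h0 w \<in> rng E ` arcs E" using assms(4) by simp
    then obtain e where "e \<in> arcs E" "h0 w = rng E e" by auto
    then obtain f where "f \<in> arcs F" "rng F f = w" using w assms(3) by (auto simp: rng_lifting_def)
    then show "w \<in> rng F ` arcs F" by blast
  qed
qed

lemma textile_LR_rng_lifting:
  assumes "textile_LR T"
  shows "rng_lifting (tF T) (tE T) (tp0 T) (tp1 T)"
    and "rng_lifting (reverse_graph (tF T)) (reverse_graph (tE T)) (tq0 T) (tq1 T)"
proof -
  have "\<forall>v\<in>verts (tF T). \<forall>e\<in>arcs (tE T). tp0 T v = rng (tE T) e \<longrightarrow>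
          (\<exists>!f. f \<in> arcs (tF T) \<and> rng (tF T) f = v \<and> tp1 T f = e)"
    using assms unfolding textile_LR_def by (elim conjE)
  then show "rng_lifting (tF T) (tE T) (tp0 T) (tp1 T)"
    unfolding rng_lifting_def Bex_def by metis
  have "\<forall>v\<in>verts (tF T). \<forall>e\<in>arcs (tE T). tq0 T v = src (tE T) e \<longrightarrow>
          (\<exists>!f. f \<in> arcs (tF T) \<and> src (tF T) f = v \<and> tq1 T f = e)"
    using assms unfolding textile_LR_def by (elim conjE)
  then show "rng_lifting (reverse_graph (tF T)) (reverse_graph (tE T)) (tq0 T) (tq1 T)"
    unfolding rng_lifting_def Bex_def reverse_graph_simps by metis
qed

definition skeleton_essential :: "('v, 'e, 'w, 'f) textile \<Rightarrow> bool" where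
  "skeleton_essential T \<longleftrightarrow>
     graph_essential (tE T) \<and>
     tp0 T ` verts (tF T) = verts (tE T) \<and> tq0 T ` verts (tF T) = verts (tE T)"

lemma textile_essential_iff_skeleton_essential:
  assumes "textile_LR T"
  shows "textile_essential T \<longleftrightarrow> skeleton_essential T"
proof -
  have "textile_system T" using assms by (simp add: textile_LR_def)
  then have E: "is_dgraph (tE T)" "is_dgraph (reverse_graph (tE T))"
    and F: "is_dgraph (tF T)" "is_dgraph (reverse_graph (tF T))"
    and p: "graph_hom (tF T) (tE T) (tp0 T) (tp1 T)"
    and q: "graph_hom (reverse_graph (tF T)) (reverse_graph (tE T)) (tq0 T) (tq1 T)"
    by (simp_all add: textile_system_def)
  note lift = textile_LR_rng_lifting[OF assms]
  show ?thesis
  proof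
    assume "textile_essential T"
    then have rngF: "rng (tF T) ` arcs (tF T) = verts (tF T)"
      and srcF: "src (tF T) ` arcs (tF T) = verts (tF T)"
      and p0: "tp0 T ` verts (tF T) = verts (tE T)"
      and q0: "tq0 T ` verts (tF T) = verts (tE T)"
      by (simp_all add: textile_essential_def graph_essential_def)
    have "rng (tE T) ` arcs (tE T) = verts (tE T)"
      using graph_hom_rng_surj[OF p E(1) p0 rngF] .
    moreover have "src (tE T) ` arcs (tE T) = verts (tE T)"
      using graph_hom_rng_surj[OF q E(2)] q0 srcF by simp
    ultimately show "skeleton_essential T"
      using p0 q0 unfolding skeleton_essential_def graph_essential_def by blast
  next
    assume "skeleton_essential T"
    then have rngE: "rng (tE T) ` arcs (tE T) = verts (tE T)"
      and srcE: "src (tE T) ` arcs (tE T) = verts (tE T)"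
      and p0: "tp0 T ` verts (tF T) = verts (tE T)"
      and q0: "tq0 T ` verts (tF T) = verts (tE T)"
      by (simp_all add: skeleton_essential_def graph_essential_def)
    have "tp1 T ` arcs (tF T) = arcs (tE T)"
      using rng_lifting_arcs_surj[OF p E(1) lift(1) p0] .
    moreover have "tq1 T ` arcs (tF T) = arcs (tE T)"
      using rng_lifting_arcs_surj[OF q E(2) lift(2)] q0 by simp
    moreover have "rng (tF T) ` arcs (tF T) = verts (tF T)"
      using rng_lifting_rng_surj[OF p F(1) lift(1) rngE] .
    moreover have "src (tF T) ` arcs (tF T) = verts (tF T)"
      using rng_lifting_rng_surj[OF q F(2) lift(2)] srcE by simp
    ultimately show "textile_essential T"
      using p0 q0 unfolding textile_essential_def graph_essential_def by blast
  qed
qed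

lemma sq_step_lam_deg: "sq_step T xs ys \<Longrightarrow> lam_deg xs = lam_deg ys"
  by (auto simp: sq_step_def lam_deg_def)

lemma sq_equiv_lam_deg:
  "(\<lambda>x y. sq_step T x y \<or> sq_step T y x)\<^sup>*\<^sup>* xs ys \<Longrightarrow> lam_deg xs = lam_deg ys"
  by (induction rule: rtranclp_induct) (auto dest: sq_step_lam_deg)

lemma lam_mor_of_sk_path:
  assumes "sk_path T a xs b"
  shows "\<exists>M\<in>lam_mor T. mor_rng M = a \<and> mor_src M = b \<and> mor_deg M = lam_deg xs"
proof -
  define M where "M = {(a', ys, b'). a' = a \<and> b' = b \<and> sk_path T a ys b \<and>
                    (\<lambda>x y. sq_step T x y \<or> sq_step T y x)\<^sup>*\<^sup>* xs ys}"
  have "M \<in> lam_mor T" unfolding M_def lam_mor_def using assms by blast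
  have "(a, xs, b) \<in> M" unfolding M_def using assms by auto
  then have "(SOME t. t \<in> M) \<in> M" by (rule someI)
  then obtain ys where "(SOME t. t \<in> M) = (a, ys, b)"
    and "(\<lambda>x y. sq_step T x y \<or> sq_step T y x)\<^sup>*\<^sup>* xs ys"
    unfolding M_def by auto
  with \<open>M \<in> lam_mor T\<close> show ?thesis
    by (auto simp: mor_rng_def mor_src_def mor_deg_def sq_equiv_lam_deg intro!: bexI[of _ M])
qed

lemma sk_path_of_lam_mor:
  assumes "M \<in> lam_mor T"
  shows "\<exists>a xs b. sk_path T a xs b \<and> mor_rng M = a \<and> mor_src M = b \<and> mor_deg M = lam_deg xs"
proof -
  obtain a xs b where "sk_path T a xs b" and
    M: "M = {(a', ys, b'). a' = a \<and> b' = b \<and> sk_path T a ys b \<and>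
                    (\<lambda>x y. sq_step T x y \<or> sq_step T y x)\<^sup>*\<^sup>* xs ys}"
    using assms unfolding lam_mor_def by blast
  then have "(a, xs, b) \<in> M" by auto
  then have "(SOME t. t \<in> M) \<in> M" by (rule someI)
  then obtain ys where "(SOME t. t \<in> M) = (a, ys, b)" and "sk_path T a ys b"
    unfolding M by auto
  then show ?thesis by (auto simp: mor_rng_def mor_src_def mor_deg_def)
qed

lemma lamT_essential_iff_sk_paths:
  "lamT_essential T \<longleftrightarrow> (\<forall>v\<in>verts (tE T). \<forall>m.
     (\<exists>xs b. sk_path T v xs b \<and> lam_deg xs = m) \<and> (\<exists>xs a. sk_path T a xs v \<and> lam_deg xs = m))"
  (is "_ \<longleftrightarrow> ?paths")
proof
  assume "lamT_essential T"
  then show ?paths unfolding lamT_essential_def by (metis sk_path_of_lam_mor)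
next
  assume ?paths
  then show "lamT_essential T" unfolding lamT_essential_def by (metis lam_mor_of_sk_path)
qed

lemma lam_deg_simps [simp]:
  "lam_deg [] = (0, 0)"
  "lam_deg (Inl e # xs) = (Suc (fst (lam_deg xs)), snd (lam_deg xs))"
  "lam_deg (Inr w # xs) = (fst (lam_deg xs), Suc (snd (lam_deg xs)))"
  by (simp_all add: lam_deg_def)

lemma sk_edge_ends:
  assumes "textile_system T" "sk_edge T x"
  shows "sk_rng T x \<in> verts (tE T)" "sk_src T x \<in> verts (tE T)"
  using assms
  by (cases x; auto simp: textile_system_def is_dgraph_def graph_hom_def)+

lemma sk_path_Nil: "sk_path T a [] b \<longleftrightarrow> a \<in> verts (tE T) \<and> b = a"
  by (auto simp: sk_path_def)

lemma sk_path_singleton: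
  "sk_path T a [x] b \<longleftrightarrow>
     a \<in> verts (tE T) \<and> b \<in> verts (tE T) \<and> sk_edge T x \<and> sk_rng T x = a \<and> sk_src T x = b"
  by (auto simp: sk_path_def)

lemma sk_path_Cons:
  assumes "textile_system T" "sk_edge T x" "sk_path T (sk_src T x) xs b"
  shows "sk_path T (sk_rng T x) (x # xs) b"
proof -
  have "sk_src T ((x # xs) ! i) = sk_rng T ((x # xs) ! Suc i)" if "Suc i < length (x # xs)" for i
    using assms(3) that by (cases i; cases xs) (auto simp: sk_path_def)
  then show ?thesis using assms sk_edge_ends[OF assms(1,2)] by (auto simp: sk_path_def)
qed

lemma sk_path_degree_1_0:
  assumes "sk_path T a xs b" "lam_deg xs = (1, 0)"
  shows "\<exists>e\<in>arcs (tE T). rng (tE T) e = a \<and> src (tE T) e = b"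
proof -
  have "\<exists>e. xs = [Inl e]"
    using assms(2)
  proof (induction xs)
    case (Cons x xs)
    then show ?case by (cases x) (auto simp: lam_deg_def filter_empty_conv)
  qed simp
  then show ?thesis using assms(1) by (auto simp: sk_path_singleton)
qed

lemma sk_path_degree_0_1:
  assumes "sk_path T a xs b" "lam_deg xs = (0, 1)"
  shows "\<exists>w\<in>verts (tF T). tq0 T w = a \<and> tp0 T w = b"
proof -
  have "\<exists>w. xs = [Inr w]"
    using assms(2)
  proof (induction xs)
    case (Cons x xs)
    then show ?case by (cases x) (auto simp: lam_deg_def filter_empty_conv)
  qed simp
  then show ?thesis using assms(1) by (auto simp: sk_path_singleton)
qed

lemma sk_path_from_vertex:
  assumes "textile_system T" "rng (tE T) ` arcs (tE T) = verts (tE T)"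
    and "tq0 T ` verts (tF T) = verts (tE T)" "v \<in> verts (tE T)"
  shows "\<exists>xs b. sk_path T v xs b \<and> lam_deg xs = (n, k)"
  using assms(4)
proof (induction n arbitrary: v)
  case 0
  then show ?case
  proof (induction k arbitrary: v)
    case 0
    then show ?case by (auto simp: sk_path_Nil intro!: exI[of _ "[]"])
  next
    case (Suc k)
    then have "v \<in> tq0 T ` verts (tF T)" using assms(3) by simp
    then obtain w where w: "sk_edge T (Inr w)" "sk_rng T (Inr w) = v" by auto
    then obtain xs b where "sk_path T (sk_src T (Inr w)) xs b" "lam_deg xs = (0, k)"
      using Suc.IH sk_edge_ends[OF assms(1)] by blast
    then show ?case using sk_path_Cons[OF assms(1) w(1)] w(2) by fastforce
  qed
next
  case (Suc n)
  then have "v \<in> rng (tE T) ` arcs (tE T)" using assms(2) by simp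
  then obtain e where e: "sk_edge T (Inl e)" "sk_rng T (Inl e) = v" by auto
  then obtain xs b where "sk_path T (sk_src T (Inl e)) xs b" "lam_deg xs = (n, k)"
    using Suc.IH sk_edge_ends[OF assms(1)] by blast
  then show ?case using sk_path_Cons[OF assms(1) e(1)] e(2) by fastforce
qed

lemma sk_path_to_vertex:
  assumes "textile_system T" "src (tE T) ` arcs (tE T) = verts (tE T)"
    and "tp0 T ` verts (tF T) = verts (tE T)" "v \<in> verts (tE T)"
  shows "\<exists>xs a. sk_path T a xs v \<and> lam_deg xs = (n, k)"
proof (induction n)
  case 0
  show ?case
  proof (induction k)
    case 0
    then show ?case using assms(4) by (auto simp: sk_path_Nil intro!: exI[of _ "[]"])
  next
    case (Suc k)
    then obtain xs a where p: "sk_path T a xs v" "lam_deg xs = (0, k)" by blast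
    then have "a \<in> tp0 T ` verts (tF T)" using assms(3) by (simp add: sk_path_def)
    then obtain w where w: "sk_edge T (Inr w)" "sk_src T (Inr w) = a" by auto
    then show ?case using p sk_path_Cons[OF assms(1) w(1)] by fastforce
  qed
next
  case (Suc n)
  then obtain xs a where p: "sk_path T a xs v" "lam_deg xs = (n, k)" by blast
  then have "a \<in> src (tE T) ` arcs (tE T)" using assms(2) by (simp add: sk_path_def)
  then obtain e where e: "sk_edge T (Inl e)" "sk_src T (Inl e) = a" by auto
  then show ?case using p sk_path_Cons[OF assms(1) e(1)] by fastforce
qed

lemma lamT_essential_iff_skeleton_essential:
  assumes "textile_system T"
  shows "lamT_essential T \<longleftrightarrow> skeleton_essential T"
proof
  assume "lamT_essential T"
  then have paths: "\<exists>xs b. sk_path T v xs b \<and> lam_deg xs = m"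
    "\<exists>xs a. sk_path T a xs v \<and> lam_deg xs = m" if "v \<in> verts (tE T)" for v m
    using that unfolding lamT_essential_iff_sk_paths by blast+
  have "v \<in> rng (tE T) ` arcs (tE T)" "v \<in> src (tE T) ` arcs (tE T)"
    "v \<in> tq0 T ` verts (tF T)" "v \<in> tp0 T ` verts (tF T)" if "v \<in> verts (tE T)" for v
    using paths[OF that, of "(1, 0)"] paths[OF that, of "(0, 1)"]
    by (blast dest: sk_path_degree_1_0 sk_path_degree_0_1)+
  moreover have "rng (tE T) ` arcs (tE T) \<subseteq> verts (tE T)" "src (tE T) ` arcs (tE T) \<subseteq> verts (tE T)"
    "tp0 T ` verts (tF T) \<subseteq> verts (tE T)" "tq0 T ` verts (tF T) \<subseteq> verts (tE T)"
    using assms by (auto simp: textile_system_def is_dgraph_def graph_hom_def)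
  ultimately show "skeleton_essential T"
    unfolding skeleton_essential_def graph_essential_def by blast
next
  assume "skeleton_essential T"
  then have "rng (tE T) ` arcs (tE T) = verts (tE T)" "src (tE T) ` arcs (tE T) = verts (tE T)"
    "tp0 T ` verts (tF T) = verts (tE T)" "tq0 T ` verts (tF T) = verts (tE T)"
    by (simp_all add: skeleton_essential_def graph_essential_def)
  then show "lamT_essential T"
    unfolding lamT_essential_iff_sk_paths
    using sk_path_from_vertex[OF assms] sk_path_to_vertex[OF assms] by (metis surj_pair)
qed

theorem proposition4p8:
  fixes T :: "('v, 'e, 'w, 'f) textile"
  assumes "textile_LR T"
  shows "textile_essential T \<longleftrightarrow> lamT_essential T"
proof -
  have "textile_system T" using assms by (simp add: textile_LR_def)
  then show ?thesis
    using textile_essential_iff_skeleton_essential[OF assms]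
      lamT_essential_iff_skeleton_essential by blast
qed

end
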